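(* Let $u=v$ be a context equation and let $u'=v'$ be obtained from it by one of the following operations: (1) replacing all occurrences of a context variable $X$ by $tX$ (respectively all occurrences of a variable $x$ by $tx$), where $t$ is a context term; (2) replacing all occurrences of a context variable $X$ by $Xt$, where $t$ is a context term; (3) replacing all occurrences of a variable $x$ by a ground term $t$; (4) performing an $(f,i,a)$ leaf compression on $u=v$; (5) performing an $a,b$ pair compression on $u=v$; (6) performing an $a$-maximal chain compression on $u=v$. If $u'=v'$ has a solution then $u=v$ has a solution.
   Context: $\Sigma$ is a ranked signature; $\Omega$ is a special constant not in $\Sigma$; context variables have arity $1$, variables arity $0$. Ground terms: finite ordered trees over $\Sigma$ with each node labelled $f$ having $\mathrm{ar}(f)$ children; ground contexts: ground terms over $\Sigma\cup\{\Omega\}$ with exactly one $\Omega$; terms: such trees over $\Sigma$, variables and context variables; context terms: trees over $\Sigma$, variables, context variables and $\Omega$ with exactly one $\Omega$. For a term or context term $s$ with one $\Omega$, "replacing $X$ by $tX$" means replacing each subterm $X(s)$ by $t$ with $\Omega$ replaced by $X(s)$, and "replacing $X$ by $Xt$" means replacing each $X(s)$ by $X(t')$ where $t'$ is $t$ with $\Omega$ replaced by $s$. A context equation is $u=v$ with $u,v$ terms. A substitution $\sigma$ assigns ground contexts to context variables and ground terms to variables, extended by $\sigma(a)=a$, $\sigma(f(t_1,\dots,t_m))=f(\sigma(t_1),\dots,\sigma(t_m))$, $\sigma(Xt)=\sigma(X)\sigma(t)$; a solution satisfies $\sigma(u)=\sigma(v)$. The compressions are performed on the equation viewed as a tree whose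 root is labelled $=$ with children $u$ and $v$ (variables and context variables are never compressed), with fresh letters not occurring in the equation: $(f,i,a)$ leaf compression ($\mathrm{ar}(f)=m\ge i\ge1$, $a$ a constant) replaces each subtree $f(t_1,\dots,t_{i-1},a,t_{i+1},\dots,t_m)$ by $f'(t_1,\dots,t_{i-1},t_{i+1},\dots,t_m)$ with $f'$ a fresh letter of arity $m-1$; $a,b$ pair compression ($a,b$ unary) replaces each node labelled $a$ whose child is labelled $b$, together with that child, by one node labelled by a fresh unary letter $c$; $a$-maximal chain compression ($a$ unary) replaces each maximal (upward and downward) chain of $\ell$ consecutive nodes labelled $a$ by one node labelled with a fresh unary letter $a_\ell$ (distinct for distinct $\ell$). *)

theory Defs
  imports Main
begin

text \<open>Trees over letters 'f (the ranked signature is a set of letters together with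
an arity function), variables 'v (arity 0), context variables 'c (arity 1, hence
exactly one child) and the special constant Omega (Hole).\<close>

datatype ('f, 'v, 'c) tm =
    Fun 'f "('f, 'v, 'c) tm list"
  | Var 'v
  | CVar 'c "('f, 'v, 'c) tm"
  | Hole

fun funs :: "('f, 'v, 'c) tm \<Rightarrow> 'f set" where
  "funs (Fun f ts) = insert f (\<Union> (set (map funs ts)))"
| "funs (Var x) = {}"
| "funs (CVar X t) = funs t"
| "funs Hole = {}"

fun holes :: "('f, 'v, 'c) tm \<Rightarrow> nat" where
  "holes (Fun f ts) = sum_list (map holes ts)"
| "holes (Var x) = 0"
| "holes (CVar X t) = holes t"
| "holes Hole = 1"

fun wf :: "('f \<Rightarrow> nat) \<Rightarrow> ('f, 'v, 'c) tm \<Rightarrow> bool" where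
  "wf ar (Fun f ts) = (length ts = ar f \<and> (\<forall>t\<in>set ts. wf ar t))"
| "wf ar (Var x) = True"
| "wf ar (CVar X t) = wf ar t"
| "wf ar Hole = True"

fun no_vars :: "('f, 'v, 'c) tm \<Rightarrow> bool" where
  "no_vars (Fun f ts) = (\<forall>t\<in>set ts. no_vars t)"
| "no_vars (Var x) = False"
| "no_vars (CVar X t) = False"
| "no_vars Hole = True"

definition is_term :: "'f set \<Rightarrow> ('f \<Rightarrow> nat) \<Rightarrow> ('f, 'v, 'c) tm \<Rightarrow> bool" where
  "is_term \<Sigma> ar t \<longleftrightarrow> wf ar t \<and> funs t \<subseteq> \<Sigma> \<and> holes t = 0"

definition is_ctxt_term :: "'f set \<Rightarrow> ('f \<Rightarrow> nat) \<Rightarrow> ('f, 'v, 'c) tm \<Rightarrow> bool" where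
  "is_ctxt_term \<Sigma> ar t \<longleftrightarrow> wf ar t \<and> funs t \<subseteq> \<Sigma> \<and> holes t = 1"

definition ground_term :: "'f set \<Rightarrow> ('f \<Rightarrow> nat) \<Rightarrow> ('f, 'v, 'c) tm \<Rightarrow> bool" where
  "ground_term \<Sigma> ar t \<longleftrightarrow> is_term \<Sigma> ar t \<and> no_vars t"

definition ground_ctxt :: "'f set \<Rightarrow> ('f \<Rightarrow> nat) \<Rightarrow> ('f, 'v, 'c) tm \<Rightarrow> bool" where
  "ground_ctxt \<Sigma> ar t \<longleftrightarrow> is_ctxt_term \<Sigma> ar t \<and> no_vars t"

fun fill :: "('f, 'v, 'c) tm \<Rightarrow> ('f, 'v, 'c) tm \<Rightarrow> ('f, 'v, 'c) tm" where
  "fill (Fun f ts) s = Fun f (map (\<lambda>t. fill t s) ts)"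
| "fill (Var x) s = Var x"
| "fill (CVar X t) s = CVar X (fill t s)"
| "fill Hole s = s"

fun sapp :: "('v \<Rightarrow> ('f, 'v, 'c) tm) \<Rightarrow> ('c \<Rightarrow> ('f, 'v, 'c) tm)
    \<Rightarrow> ('f, 'v, 'c) tm \<Rightarrow> ('f, 'v, 'c) tm" where
  "sapp sx sX (Fun f ts) = Fun f (map (sapp sx sX) ts)"
| "sapp sx sX (Var x) = sx x"
| "sapp sx sX (CVar X t) = fill (sX X) (sapp sx sX t)"
| "sapp sx sX Hole = Hole"

definition is_solution :: "'f set \<Rightarrow> ('f \<Rightarrow> nat) \<Rightarrow> ('v \<Rightarrow> ('f, 'v, 'c) tm)
    \<Rightarrow> ('c \<Rightarrow> ('f, 'v, 'c) tm) \<Rightarrow> ('f, 'v, 'c) tm \<Rightarrow> ('f, 'v, 'c) tm \<Rightarrow> bool" where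
  "is_solution \<Sigma> ar sx sX u v \<longleftrightarrow>
     (\<forall>x. ground_term \<Sigma> ar (sx x)) \<and> (\<forall>X. ground_ctxt \<Sigma> ar (sX X)) \<and>
     sapp sx sX u = sapp sx sX v"

definition solvable :: "'f set \<Rightarrow> ('f \<Rightarrow> nat) \<Rightarrow> ('f, 'v, 'c) tm \<Rightarrow> ('f, 'v, 'c) tm \<Rightarrow> bool" where
  "solvable \<Sigma> ar u v \<longleftrightarrow> (\<exists>sx sX. is_solution \<Sigma> ar sx sX u v)"

text \<open>(1) X replaced by tX: each X(s) becomes t[X(s)] (simultaneously; occurrences
inside s are replaced as well, occurrences inside the inserted t are not).\<close>
fun pre_cvar :: "'c \<Rightarrow> ('f, 'v, 'c) tm \<Rightarrow> ('f, 'v, 'c) tm \<Rightarrow> ('f, 'v, 'c) tm" where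
  "pre_cvar X t (Fun f ts) = Fun f (map (pre_cvar X t) ts)"
| "pre_cvar X t (Var y) = Var y"
| "pre_cvar X t (CVar Y s) =
     (if Y = X then fill t (CVar X (pre_cvar X t s)) else CVar Y (pre_cvar X t s))"
| "pre_cvar X t Hole = Hole"

fun pre_var :: "'v \<Rightarrow> ('f, 'v, 'c) tm \<Rightarrow> ('f, 'v, 'c) tm \<Rightarrow> ('f, 'v, 'c) tm" where
  "pre_var x t (Fun f ts) = Fun f (map (pre_var x t) ts)"
| "pre_var x t (Var y) = (if y = x then fill t (Var x) else Var y)"
| "pre_var x t (CVar Y s) = CVar Y (pre_var x t s)"
| "pre_var x t Hole = Hole"

fun post_cvar :: "'c \<Rightarrow> ('f, 'v, 'c) tm \<Rightarrow> ('f, 'v, 'c) tm \<Rightarrow> ('f, 'v, 'c) tm" where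
  "post_cvar X t (Fun f ts) = Fun f (map (post_cvar X t) ts)"
| "post_cvar X t (Var y) = Var y"
| "post_cvar X t (CVar Y s) =
     (if Y = X then CVar X (fill t (post_cvar X t s)) else CVar Y (post_cvar X t s))"
| "post_cvar X t Hole = Hole"

fun inst_var :: "'v \<Rightarrow> ('f, 'v, 'c) tm \<Rightarrow> ('f, 'v, 'c) tm \<Rightarrow> ('f, 'v, 'c) tm" where
  "inst_var x t (Fun f ts) = Fun f (map (inst_var x t) ts)"
| "inst_var x t (Var y) = (if y = x then t else Var y)"
| "inst_var x t (CVar Y s) = CVar Y (inst_var x t s)"
| "inst_var x t Hole = Hole"

fun leaf_comp :: "'f \<Rightarrow> nat \<Rightarrow> 'f \<Rightarrow> 'f \<Rightarrow> ('f, 'v, 'c) tm \<Rightarrow> ('f, 'v, 'c) tm" where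
  "leaf_comp f i a f' (Fun g ts) =
     (let ts' = map (leaf_comp f i a f') ts in
      if g = f \<and> 1 \<le> i \<and> i \<le> length ts \<and> ts ! (i - 1) = Fun a []
      then Fun f' (take (i - 1) ts' @ drop i ts')
      else Fun g ts')"
| "leaf_comp f i a f' (Var y) = Var y"
| "leaf_comp f i a f' (CVar Y s) = CVar Y (leaf_comp f i a f' s)"
| "leaf_comp f i a f' Hole = Hole"

text \<open>(5) a,b pair compression with fresh letter c (occurrences processed top-down).\<close>
fun pair_comp :: "'f \<Rightarrow> 'f \<Rightarrow> 'f \<Rightarrow> ('f, 'v, 'c) tm \<Rightarrow> ('f, 'v, 'c) tm" where
  "pair_comp a b c (Fun g [Fun h [s]]) =
     (if g = a \<and> h = b then Fun c [pair_comp a b c s]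
      else Fun g [pair_comp a b c (Fun h [s])])"
| "pair_comp a b c (Fun g ts) = Fun g (map (pair_comp a b c) ts)"
| "pair_comp a b c (Var y) = Var y"
| "pair_comp a b c (CVar Y s) = CVar Y (pair_comp a b c s)"
| "pair_comp a b c Hole = Hole"

text \<open>(6) a-maximal chain compression; ac l is the fresh letter a_l.
The accumulator k counts the a-nodes of the current chain seen so far.\<close>
definition wrap_chain :: "(nat \<Rightarrow> 'f) \<Rightarrow> nat \<Rightarrow> ('f, 'v, 'c) tm \<Rightarrow> ('f, 'v, 'c) tm" where
  "wrap_chain ac k s = (if k = 0 then s else Fun (ac k) [s])"

fun chain_comp_aux :: "'f \<Rightarrow> (nat \<Rightarrow> 'f) \<Rightarrow> nat \<Rightarrow> ('f, 'v, 'c) tm \<Rightarrow> ('f, 'v, 'c) tm" where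
  "chain_comp_aux a ac k (Fun g [t]) =
     (if g = a then chain_comp_aux a ac (Suc k) t
      else wrap_chain ac k (Fun g [chain_comp_aux a ac 0 t]))"
| "chain_comp_aux a ac k (Fun g ts) = wrap_chain ac k (Fun g (map (chain_comp_aux a ac 0) ts))"
| "chain_comp_aux a ac k (Var y) = wrap_chain ac k (Var y)"
| "chain_comp_aux a ac k (CVar Y s) = wrap_chain ac k (CVar Y (chain_comp_aux a ac 0 s))"
| "chain_comp_aux a ac k Hole = wrap_chain ac k Hole"

definition chain_comp :: "'f \<Rightarrow> (nat \<Rightarrow> 'f) \<Rightarrow> ('f, 'v, 'c) tm \<Rightarrow> ('f, 'v, 'c) tm" where
  "chain_comp a ac t = chain_comp_aux a ac 0 t"

definition fresh_for :: "'f \<Rightarrow> ('f, 'v, 'c) tm \<Rightarrow> ('f, 'v, 'c) tm \<Rightarrow> bool" where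
  "fresh_for f u v \<longleftrightarrow> f \<notin> funs u \<and> f \<notin> funs v"

definition one_step :: "'f set \<Rightarrow> ('f \<Rightarrow> nat) \<Rightarrow> ('f, 'v, 'c) tm \<Rightarrow> ('f, 'v, 'c) tm
    \<Rightarrow> 'f set \<Rightarrow> ('f, 'v, 'c) tm \<Rightarrow> ('f, 'v, 'c) tm \<Rightarrow> bool" where
  "one_step \<Sigma> ar u v \<Sigma>' u' v' \<longleftrightarrow>
     \<comment> \<open>(1) X by tX\<close>
     (\<exists>X t. is_ctxt_term \<Sigma> ar t \<and> \<Sigma>' = \<Sigma> \<and>
        u' = pre_cvar X t u \<and> v' = pre_cvar X t v) \<or>
     \<comment> \<open>(1) x by tx\<close>
     (\<exists>x t. is_ctxt_term \<Sigma> ar t \<and> \<Sigma>' = \<Sigma> \<and>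
        u' = pre_var x t u \<and> v' = pre_var x t v) \<or>
     \<comment> \<open>(2) X by Xt\<close>
     (\<exists>X t. is_ctxt_term \<Sigma> ar t \<and> \<Sigma>' = \<Sigma> \<and>
        u' = post_cvar X t u \<and> v' = post_cvar X t v) \<or>
     \<comment> \<open>(3) x by a ground term t\<close>
     (\<exists>x t. ground_term \<Sigma> ar t \<and> \<Sigma>' = \<Sigma> \<and>
        u' = inst_var x t u \<and> v' = inst_var x t v) \<or>
     \<comment> \<open>(4) (f,i,a) leaf compression\<close>
     (\<exists>f i a f'. f \<in> \<Sigma> \<and> a \<in> \<Sigma> \<and> ar a = 0 \<and> 1 \<le> i \<and> i \<le> ar f \<and>
        fresh_for f' u v \<and> ar f' = ar f - 1 \<and> \<Sigma>' = insert f' \<Sigma> \<and>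
        u' = leaf_comp f i a f' u \<and> v' = leaf_comp f i a f' v) \<or>
     \<comment> \<open>(5) a,b pair compression\<close>
     (\<exists>a b c. a \<in> \<Sigma> \<and> b \<in> \<Sigma> \<and> ar a = 1 \<and> ar b = 1 \<and>
        fresh_for c u v \<and> ar c = 1 \<and> \<Sigma>' = insert c \<Sigma> \<and>
        u' = pair_comp a b c u \<and> v' = pair_comp a b c v) \<or>
     \<comment> \<open>(6) a-maximal chain compression\<close>
     (\<exists>a ac. a \<in> \<Sigma> \<and> ar a = 1 \<and> inj_on ac {1..} \<and>
        (\<forall>l\<ge>1. fresh_for (ac l) u v \<and> ar (ac l) = 1) \<and> \<Sigma>' = \<Sigma> \<union> ac ` {1..} \<and>
        u' = chain_comp a ac u \<and> v' = chain_comp a ac v)"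

end

theory Submission
  imports Defs
begin

text \<open>Operations (1)--(3) are undone by changing the solution: if \<open>\<sigma>\<close> solves \<open>u' = v'\<close>, then
\<open>u = v\<close> is solved by \<open>\<sigma>\<close> with \<open>X\<close> (resp. \<open>x\<close>) mapped to \<open>\<sigma>(t)\<sigma>(X)\<close> (resp. \<open>\<sigma>(t)\<sigma>(x)\<close>), with \<open>X\<close>
mapped to \<open>\<sigma>(X)\<sigma>(t)\<close>, or with \<open>x\<close> mapped to \<open>t\<close>.
Compressions (4)--(6) are undone by the tree homomorphism that expands each fresh letter back
into the pattern it abbreviates; such a homomorphism commutes with substitution and maps
ground terms over the extended signature to ground terms over the original one, so it sends
a solution of \<open>u' = v'\<close> to a solution of \<open>u = v\<close>.\<close>

definition ground_tree :: "'f set \<Rightarrow> ('f \<Rightarrow> nat) \<Rightarrow> ('f, 'v, 'c) tm \<Rightarrow> bool" where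
  "ground_tree \<Sigma> ar t \<longleftrightarrow> wf ar t \<and> funs t \<subseteq> \<Sigma> \<and> no_vars t"

lemma ground_term_iff: "ground_term \<Sigma> ar t \<longleftrightarrow> ground_tree \<Sigma> ar t \<and> holes t = 0"
  by (auto simp: ground_term_def is_term_def ground_tree_def)

lemma ground_ctxt_iff: "ground_ctxt \<Sigma> ar t \<longleftrightarrow> ground_tree \<Sigma> ar t \<and> holes t = 1"
  by (auto simp: ground_ctxt_def is_ctxt_term_def ground_tree_def)

lemma ground_tree_Fun:
  "ground_tree \<Sigma> ar (Fun g ts) \<longleftrightarrow> g \<in> \<Sigma> \<and> length ts = ar g \<and> (\<forall>t\<in>set ts. ground_tree \<Sigma> ar t)"
  by (auto simp: ground_tree_def UN_subset_iff)

lemma sum_list_holes_map: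
  "(\<And>t. t \<in> set ts \<Longrightarrow> holes (\<phi> t) = holes t) \<Longrightarrow>
     sum_list (map (holes \<circ> \<phi>) ts) = sum_list (map holes ts)"
  by (induction ts) auto

lemma fill_assoc: "fill (fill A B) C = fill A (fill B C)"
  by (induction A) auto

lemma fill_no_holes: "holes t = 0 \<Longrightarrow> fill t s = t"
  by (induction t) (auto intro: map_idI)

lemma holes_fill: "holes (fill t s) = holes t * holes s"
proof (induction t)
  case (Fun f ts)
  then show ?case by (induction ts) (auto simp: algebra_simps)
qed auto

lemma ground_tree_fill: "ground_tree \<Sigma> ar t \<Longrightarrow> ground_tree \<Sigma> ar s \<Longrightarrow> ground_tree \<Sigma> ar (fill t s)"
  by (induction t) (auto simp: ground_tree_def UN_subset_iff)

lemma sapp_fill: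
  "(\<And>x. holes (sx x) = 0) \<Longrightarrow> sapp sx sX (fill t s) = fill (sapp sx sX t) (sapp sx sX s)"
  by (induction t) (auto simp: fill_assoc fill_no_holes)

lemma sapp_no_vars: "no_vars t \<Longrightarrow> sapp sx sX t = t"
  by (induction t) (auto intro: map_idI)

lemma ground_tree_sapp:
  assumes "\<And>x. ground_term \<Sigma> ar (sx x)" and "\<And>X. ground_ctxt \<Sigma> ar (sX X)"
    and "wf ar t" and "funs t \<subseteq> \<Sigma>"
  shows "ground_tree \<Sigma> ar (sapp sx sX t) \<and> holes (sapp sx sX t) = holes t"
  using assms(3,4)
proof (induction t)
  case (Fun f ts)
  then show ?case by (auto simp: ground_tree_Fun UN_subset_iff sum_list_holes_map)
next
  case (CVar X t)
  then show ?case using assms(2)[of X] by (simp add: ground_ctxt_iff holes_fill ground_tree_fill)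
qed (use assms(1) in \<open>auto simp: ground_term_iff ground_tree_def\<close>)

lemma ground_ctxt_sapp:
  "is_solution \<Sigma> ar sx sX u v \<Longrightarrow> is_ctxt_term \<Sigma> ar t \<Longrightarrow> ground_ctxt \<Sigma> ar (sapp sx sX t)"
  using ground_tree_sapp[of \<Sigma> ar sx sX t]
  by (simp add: is_solution_def is_ctxt_term_def ground_ctxt_iff)

lemma sapp_pre_cvar:
  "(\<And>x. holes (sx x) = 0) \<Longrightarrow>
     sapp sx sX (pre_cvar X t w) = sapp sx (sX(X := fill (sapp sx sX t) (sX X))) w"
  by (induction w) (auto simp: sapp_fill fill_assoc)

lemma sapp_pre_var:
  "(\<And>x. holes (sx x) = 0) \<Longrightarrow>
     sapp sx sX (pre_var x t w) = sapp (sx(x := fill (sapp sx sX t) (sx x))) sX w"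
  by (induction w) (auto simp: sapp_fill fill_assoc)

lemma sapp_post_cvar:
  "(\<And>x. holes (sx x) = 0) \<Longrightarrow>
     sapp sx sX (post_cvar X t w) = sapp sx (sX(X := fill (sX X) (sapp sx sX t))) w"
  by (induction w) (auto simp: sapp_fill fill_assoc)

lemma sapp_inst_var: "no_vars t \<Longrightarrow> sapp sx sX (inst_var x t w) = sapp (sx(x := t)) sX w"
  by (induction w) (auto simp: sapp_no_vars)

lemma solvable_of_pre_cvar:
  assumes "is_ctxt_term \<Sigma> ar t" and "solvable \<Sigma> ar (pre_cvar X t u) (pre_cvar X t v)"
  shows "solvable \<Sigma> ar u v"
proof -
  obtain sx sX where s: "is_solution \<Sigma> ar sx sX (pre_cvar X t u) (pre_cvar X t v)"
    using assms(2) by (auto simp: solvable_def)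
  have "ground_ctxt \<Sigma> ar (fill (sapp sx sX t) (sX X))"
    using ground_ctxt_sapp[OF s assms(1)] s
    by (auto simp: is_solution_def ground_ctxt_iff ground_tree_fill holes_fill)
  with s have "is_solution \<Sigma> ar sx (sX(X := fill (sapp sx sX t) (sX X))) u v"
    by (auto simp: is_solution_def ground_term_iff sapp_pre_cvar[symmetric])
  then show ?thesis by (auto simp: solvable_def)
qed

lemma solvable_of_pre_var:
  assumes "is_ctxt_term \<Sigma> ar t" and "solvable \<Sigma> ar (pre_var x t u) (pre_var x t v)"
  shows "solvable \<Sigma> ar u v"
proof -
  obtain sx sX where s: "is_solution \<Sigma> ar sx sX (pre_var x t u) (pre_var x t v)"
    using assms(2) by (auto simp: solvable_def)
  have "ground_term \<Sigma> ar (fill (sapp sx sX t) (sx x))"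
    using ground_ctxt_sapp[OF s assms(1)] s
    by (auto simp: is_solution_def ground_ctxt_iff ground_term_iff ground_tree_fill holes_fill)
  with s have "is_solution \<Sigma> ar (sx(x := fill (sapp sx sX t) (sx x))) sX u v"
    by (auto simp: is_solution_def ground_term_iff sapp_pre_var[symmetric])
  then show ?thesis by (auto simp: solvable_def)
qed

lemma solvable_of_post_cvar:
  assumes "is_ctxt_term \<Sigma> ar t" and "solvable \<Sigma> ar (post_cvar X t u) (post_cvar X t v)"
  shows "solvable \<Sigma> ar u v"
proof -
  obtain sx sX where s: "is_solution \<Sigma> ar sx sX (post_cvar X t u) (post_cvar X t v)"
    using assms(2) by (auto simp: solvable_def)
  have "ground_ctxt \<Sigma> ar (fill (sX X) (sapp sx sX t))"
    using ground_ctxt_sapp[OF s assms(1)] s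
    by (auto simp: is_solution_def ground_ctxt_iff ground_tree_fill holes_fill)
  with s have "is_solution \<Sigma> ar sx (sX(X := fill (sX X) (sapp sx sX t))) u v"
    by (auto simp: is_solution_def ground_term_iff sapp_post_cvar[symmetric])
  then show ?thesis by (auto simp: solvable_def)
qed

lemma solvable_of_inst_var:
  assumes "ground_term \<Sigma> ar t" and "solvable \<Sigma> ar (inst_var x t u) (inst_var x t v)"
  shows "solvable \<Sigma> ar u v"
proof -
  obtain sx sX where s: "is_solution \<Sigma> ar sx sX (inst_var x t u) (inst_var x t v)"
    using assms(2) by (auto simp: solvable_def)
  have "no_vars t" using assms(1) by (simp add: ground_term_def)
  with s assms(1) have "is_solution \<Sigma> ar (sx(x := t)) sX u v"
    by (auto simp: is_solution_def sapp_inst_var[symmetric])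
  then show ?thesis by (auto simp: solvable_def)
qed

definition preserves_Fun :: "(('f, 'v, 'c) tm \<Rightarrow> ('f, 'v, 'c) tm) \<Rightarrow> bool" where
  "preserves_Fun \<phi> \<longleftrightarrow> (\<forall>g ts. \<phi> (Fun g ts) = Fun g (map \<phi> ts))"

text \<open>Naturality says
that \<open>ex g ts\<close> is built from \<open>ts\<close> by letters only, so that filling holes and applying
substitutions can be pushed through it.\<close>

definition natural_expansion :: "('f \<Rightarrow> ('f, 'v, 'c) tm list \<Rightarrow> ('f, 'v, 'c) tm) \<Rightarrow> bool" where
  "natural_expansion ex \<longleftrightarrow> (\<forall>\<phi> g ts. preserves_Fun \<phi> \<longrightarrow> \<phi> (ex g ts) = ex g (map \<phi> ts))"

definition ground_expansion ::
    "'f set \<Rightarrow> 'f set \<Rightarrow> ('f \<Rightarrow> nat) \<Rightarrow> ('f \<Rightarrow> ('f, 'v, 'c) tm list \<Rightarrow> ('f, 'v, 'c) tm) \<Rightarrow> bool" where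
  "ground_expansion \<Sigma>' \<Sigma> ar ex \<longleftrightarrow>
     (\<forall>g\<in>\<Sigma>'. \<forall>ts. length ts = ar g \<longrightarrow> (\<forall>t\<in>set ts. ground_tree \<Sigma> ar t) \<longrightarrow>
        ground_tree \<Sigma> ar (ex g ts) \<and> holes (ex g ts) = sum_list (map holes ts))"

fun expand :: "('f \<Rightarrow> ('f, 'v, 'c) tm list \<Rightarrow> ('f, 'v, 'c) tm) \<Rightarrow> ('f, 'v, 'c) tm \<Rightarrow> ('f, 'v, 'c) tm" where
  "expand ex (Fun g ts) = ex g (map (expand ex) ts)"
| "expand ex (Var x) = Var x"
| "expand ex (CVar X t) = CVar X (expand ex t)"
| "expand ex Hole = Hole"

lemma preserves_Fun_fill: "preserves_Fun (\<lambda>t. fill t s)"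
  by (simp add: preserves_Fun_def)

lemma preserves_Fun_sapp: "preserves_Fun (sapp sx sX)"
  by (simp add: preserves_Fun_def)

lemma natural_expansionD: "natural_expansion ex \<Longrightarrow> preserves_Fun \<phi> \<Longrightarrow> \<phi> (ex g ts) = ex g (map \<phi> ts)"
  by (simp add: natural_expansion_def)

lemma expand_fill:
  assumes "natural_expansion ex"
  shows "expand ex (fill C s) = fill (expand ex C) (expand ex s)"
proof (induction C)
  case (Fun g ts)
  then have "expand ex (fill (Fun g ts) s) = ex g (map (\<lambda>t. fill t (expand ex s)) (map (expand ex) ts))"
    by (simp cong: map_cong)
  also have "\<dots> = fill (expand ex (Fun g ts)) (expand ex s)"
    using natural_expansionD[OF assms preserves_Fun_fill] by simp
  finally show ?case .
qed auto

lemma expand_sapp: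
  assumes "natural_expansion ex"
  shows "expand ex (sapp sx sX t) = sapp (expand ex \<circ> sx) (expand ex \<circ> sX) (expand ex t)"
proof (induction t)
  case (Fun g ts)
  then have "expand ex (sapp sx sX (Fun g ts))
      = ex g (map (sapp (expand ex \<circ> sx) (expand ex \<circ> sX)) (map (expand ex) ts))"
    by (simp add: o_def cong: map_cong)
  also have "\<dots> = sapp (expand ex \<circ> sx) (expand ex \<circ> sX) (expand ex (Fun g ts))"
    using natural_expansionD[OF assms preserves_Fun_sapp] by simp
  finally show ?case .
qed (auto simp: expand_fill[OF assms])

lemma ground_tree_expand:
  assumes "ground_expansion \<Sigma>' \<Sigma> ar ex" and "ground_tree \<Sigma>' ar t"
  shows "ground_tree \<Sigma> ar (expand ex t) \<and> holes (expand ex t) = holes t"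
  using assms(2)
proof (induction t)
  case (Fun g ts)
  then have "ground_tree \<Sigma> ar (ex g (map (expand ex) ts)) \<and>
      holes (ex g (map (expand ex) ts)) = sum_list (map (holes \<circ> expand ex) ts)"
    using assms(1) by (auto simp: ground_expansion_def ground_tree_Fun)
  with Fun show ?case by (simp add: ground_tree_Fun sum_list_holes_map)
qed (auto simp: ground_tree_def)

lemma solvable_of_expand:
  assumes "natural_expansion ex" and "ground_expansion \<Sigma>' \<Sigma> ar ex"
    and "expand ex u' = u" and "expand ex v' = v" and "solvable \<Sigma>' ar u' v'"
  shows "solvable \<Sigma> ar u v"
proof -
  obtain sx sX where s: "is_solution \<Sigma>' ar sx sX u' v'"
    using assms(5) by (auto simp: solvable_def)
  then have "is_solution \<Sigma> ar (expand ex \<circ> sx) (expand ex \<circ> sX) u v"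
    using ground_tree_expand[OF assms(2)] assms(3,4)
    by (auto simp: is_solution_def ground_term_iff ground_ctxt_iff expand_sapp[OF assms(1), symmetric])
  then show ?thesis by (auto simp: solvable_def)
qed

definition leaf_expansion ::
    "'f \<Rightarrow> nat \<Rightarrow> 'f \<Rightarrow> 'f \<Rightarrow> 'f \<Rightarrow> ('f, 'v, 'c) tm list \<Rightarrow> ('f, 'v, 'c) tm" where
  "leaf_expansion f i a f' g ts =
     (if g = f' then Fun f (take (i - 1) ts @ Fun a [] # drop (i - 1) ts) else Fun g ts)"

lemma natural_leaf_expansion: "natural_expansion (leaf_expansion f i a f')"
  by (simp add: natural_expansion_def preserves_Fun_def leaf_expansion_def take_map drop_map)

lemma sum_list_holes_take_drop:
  "sum_list (map holes (take n ts) @ 0 # map holes (drop n ts)) = sum_list (map holes ts)"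
proof -
  have "sum_list (map holes (take n ts)) + sum_list (map holes (drop n ts)) = sum_list (map holes ts)"
    by (metis append_take_drop_id map_append sum_list_append)
  then show ?thesis by simp
qed

lemma ground_leaf_expansion:
  assumes "f \<in> \<Sigma>" and "a \<in> \<Sigma>" and "ar a = 0" and "1 \<le> i" and "i \<le> ar f"
    and "ar f' = ar f - 1"
  shows "ground_expansion (insert f' \<Sigma>) \<Sigma> ar (leaf_expansion f i a f')"
  using assms
  by (auto simp: ground_expansion_def leaf_expansion_def ground_tree_Fun sum_list_holes_take_drop
      simp del: sum_list_append dest: in_set_takeD in_set_dropD)

lemma take_drop_reinsert_nth:
  assumes "1 \<le> i" and "i \<le> length xs"
  shows "take (i - 1) (take (i - 1) xs @ drop i xs) @ xs ! (i - 1)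
           # drop (i - 1) (take (i - 1) xs @ drop i xs) = xs"
  using assms id_take_nth_drop[of "i - 1" xs] by (simp add: min_def drop_take)

lemma expand_leaf_comp: "f' \<notin> funs u \<Longrightarrow> expand (leaf_expansion f i a f') (leaf_comp f i a f' u) = u"
proof (induction u)
  case (Fun g ts)
  let ?E = "expand (leaf_expansion f i a f')"
  define ts' where "ts' = map (leaf_comp f i a f') ts"
  have ts': "map ?E ts' = ts"
    using Fun unfolding ts'_def by (auto intro: map_idI)
  show ?case
  proof (cases "g = f \<and> 1 \<le> i \<and> i \<le> length ts \<and> ts ! (i - 1) = Fun a []")
    case True
    then have "?E (leaf_comp f i a f' (Fun g ts)) = ?E (Fun f' (take (i - 1) ts' @ drop i ts'))"
      by (simp add: ts'_def Let_def)
    also have "\<dots> = leaf_expansion f i a f' f' (take (i - 1) ts @ drop i ts)"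
      by (simp only: expand.simps map_append flip: take_map drop_map) (simp only: ts')
    also have "\<dots> = Fun f (take (i - 1) (take (i - 1) ts @ drop i ts) @ ts ! (i - 1)
                      # drop (i - 1) (take (i - 1) ts @ drop i ts))"
      using True by (simp only: leaf_expansion_def if_P)
    also have "\<dots> = Fun g ts"
      using True take_drop_reinsert_nth[of i ts] by metis
    finally show ?thesis .
  next
    case False
    then have "?E (leaf_comp f i a f' (Fun g ts)) = leaf_expansion f i a f' g (map ?E ts')"
      by (simp only: leaf_comp.simps Let_def if_not_P if_False ts'_def expand.simps)
    also have "\<dots> = Fun g ts"
      using Fun.prems ts' by (auto simp: leaf_expansion_def)
    finally show ?thesis .
  qed
qed auto

definition pair_expansion :: "'f \<Rightarrow> 'f \<Rightarrow> 'f \<Rightarrow> 'f \<Rightarrow> ('f, 'v, 'c) tm list \<Rightarrow> ('f, 'v, 'c) tm" where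
  "pair_expansion a b c g ts = (if g = c then Fun a [Fun b ts] else Fun g ts)"

lemma pair_expansion_simps [simp]:
  "pair_expansion a b c c ts = Fun a [Fun b ts]"
  "c \<noteq> g \<Longrightarrow> pair_expansion a b c g ts = Fun g ts"
  by (simp_all add: pair_expansion_def)

lemma natural_pair_expansion: "natural_expansion (pair_expansion a b c)"
  by (simp add: natural_expansion_def preserves_Fun_def pair_expansion_def)

lemma ground_pair_expansion:
  assumes "a \<in> \<Sigma>" and "b \<in> \<Sigma>" and "ar a = 1" and "ar b = 1" and "ar c = 1"
  shows "ground_expansion (insert c \<Sigma>) \<Sigma> ar (pair_expansion a b c)"
  using assms by (auto simp: ground_expansion_def pair_expansion_def ground_tree_Fun)

lemma pair_comp_Fun_other:
  "\<not> (g = a \<and> (\<exists>s. ts = [Fun b [s]])) \<Longrightarrow> pair_comp a b c (Fun g ts) = Fun g (map (pair_comp a b c) ts)"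
  by (cases "(a, b, c, Fun g ts)" rule: pair_comp.cases) auto

lemma expand_pair_comp: "c \<notin> funs u \<Longrightarrow> expand (pair_expansion a b c) (pair_comp a b c u) = u"
proof (induction u rule: measure_induct_rule[of size])
  case (less u)
  show ?case
  proof (cases u)
    case (Fun g ts)
    show ?thesis
    proof (cases "g = a \<and> (\<exists>s. ts = [Fun b [s]])")
      case True
      then obtain s where "ts = [Fun b [s]]" and "g = a" by auto
      with less Fun show ?thesis by simp
    next
      case False
      have "map (expand (pair_expansion a b c) \<circ> pair_comp a b c) ts = ts"
        using less Fun by (auto intro!: map_idI simp: le_imp_less_Suc size_list_estimation')
      with less Fun show ?thesis by (simp add: pair_comp_Fun_other[OF False])
    qed
  qed (use less in auto)
qed

lemma funpow_unary_Fun_swap: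
  "((\<lambda>s. Fun a [s]) ^^ n) (Fun a [t]) = Fun a [((\<lambda>s. Fun a [s]) ^^ n) t]"
  by (induction n) simp_all

lemma preserves_Fun_funpow:
  "preserves_Fun \<phi> \<Longrightarrow> \<phi> (((\<lambda>s. Fun a [s]) ^^ n) t) = ((\<lambda>s. Fun a [s]) ^^ n) (\<phi> t)"
  by (induction n) (simp_all add: preserves_Fun_def)

lemma ground_tree_funpow:
  assumes "a \<in> \<Sigma>" and "ar a = 1" and "ground_tree \<Sigma> ar t"
  shows "ground_tree \<Sigma> ar (((\<lambda>s. Fun a [s]) ^^ n) t) \<and> holes (((\<lambda>s. Fun a [s]) ^^ n) t) = holes t"
  using assms by (induction n) (simp_all add: ground_tree_Fun)

definition chain_expansion :: "'f \<Rightarrow> (nat \<Rightarrow> 'f) \<Rightarrow> 'f \<Rightarrow> ('f, 'v, 'c) tm list \<Rightarrow> ('f, 'v, 'c) tm" where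
  "chain_expansion a ac g ts =
     (if g \<in> ac ` {1..} then ((\<lambda>s. Fun a [s]) ^^ (the_inv_into {1..} ac g - 1)) (Fun a ts)
      else Fun g ts)"

lemma chain_expansion_other [simp]:
  "(\<And>l. 1 \<le> l \<Longrightarrow> ac l \<noteq> g) \<Longrightarrow> chain_expansion a ac g ts = Fun g ts"
  by (auto simp: chain_expansion_def)

lemma chain_expansion_chain [simp]:
  "inj_on ac {1..} \<Longrightarrow> 1 \<le> l \<Longrightarrow> chain_expansion a ac (ac l) [t] = ((\<lambda>s. Fun a [s]) ^^ l) t"
  by (cases l) (simp_all add: chain_expansion_def the_inv_into_f_f funpow_unary_Fun_swap)

lemma natural_chain_expansion: "natural_expansion (chain_expansion a ac)"
  by (simp add: natural_expansion_def chain_expansion_def preserves_Fun_funpow)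
    (simp add: preserves_Fun_def)

lemma ground_chain_expansion:
  assumes "a \<in> \<Sigma>" and "ar a = 1" and "\<forall>l\<ge>1. ar (ac l) = 1"
  shows "ground_expansion (\<Sigma> \<union> ac ` {1..}) \<Sigma> ar (chain_expansion a ac)"
  using assms by (auto simp: ground_expansion_def chain_expansion_def ground_tree_Fun ground_tree_funpow)

lemma expand_wrap_chain:
  "inj_on ac {1..} \<Longrightarrow>
     expand (chain_expansion a ac) (wrap_chain ac k s) = ((\<lambda>s. Fun a [s]) ^^ k) (expand (chain_expansion a ac) s)"
  by (simp add: wrap_chain_def)

lemma chain_comp_aux_Fun:
  "chain_comp_aux a ac k (Fun g ts) =
     (if g = a \<and> length ts = 1 then chain_comp_aux a ac (Suc k) (hd ts)
      else wrap_chain ac k (Fun g (map (chain_comp_aux a ac 0) ts)))"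
  by (cases "(a, ac, k, Fun g ts)" rule: chain_comp_aux.cases) auto

lemma expand_chain_comp_aux:
  assumes "inj_on ac {1..}" and "\<forall>l\<ge>1. ac l \<notin> funs u"
  shows "expand (chain_expansion a ac) (chain_comp_aux a ac k u) = ((\<lambda>s. Fun a [s]) ^^ k) u"
  using assms(2)
proof (induction u arbitrary: k)
  case (Fun g ts)
  show ?case
  proof (cases "g = a \<and> length ts = 1")
    case True
    then obtain t where "ts = [t]" and "g = a" by (auto simp: length_Suc_conv)
    with Fun show ?thesis by (simp add: chain_comp_aux_Fun funpow_unary_Fun_swap)
  next
    case False
    have "map (expand (chain_expansion a ac) \<circ> chain_comp_aux a ac 0) ts = ts"
      using Fun by (auto intro!: map_idI)
    with False Fun.prems show ?thesis
      by (simp add: chain_comp_aux_Fun[of a ac k g ts] if_not_P expand_wrap_chain[OF assms(1)])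
  qed
qed (simp_all add: expand_wrap_chain[OF assms(1)])

lemma solvable_of_leaf_comp:
  assumes "f \<in> \<Sigma>" and "a \<in> \<Sigma>" and "ar a = 0" and "1 \<le> i" and "i \<le> ar f"
    and "ar f' = ar f - 1" and "fresh_for f' u v"
    and "solvable (insert f' \<Sigma>) ar (leaf_comp f i a f' u) (leaf_comp f i a f' v)"
  shows "solvable \<Sigma> ar u v"
proof (rule solvable_of_expand[OF natural_leaf_expansion ground_leaf_expansion[OF assms(1-6)] _ _ assms(8)])
  show "expand (leaf_expansion f i a f') (leaf_comp f i a f' u) = u"
    and "expand (leaf_expansion f i a f') (leaf_comp f i a f' v) = v"
    using assms(7) by (simp_all add: fresh_for_def expand_leaf_comp)
qed

lemma solvable_of_pair_comp:
  assumes "a \<in> \<Sigma>" and "b \<in> \<Sigma>" and "ar a = 1" and "ar b = 1" and "ar c = 1"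
    and "fresh_for c u v" and "solvable (insert c \<Sigma>) ar (pair_comp a b c u) (pair_comp a b c v)"
  shows "solvable \<Sigma> ar u v"
proof (rule solvable_of_expand[OF natural_pair_expansion ground_pair_expansion[OF assms(1-5)] _ _ assms(7)])
  show "expand (pair_expansion a b c) (pair_comp a b c u) = u"
    and "expand (pair_expansion a b c) (pair_comp a b c v) = v"
    using assms(6) by (simp_all add: fresh_for_def expand_pair_comp)
qed

lemma solvable_of_chain_comp:
  assumes "a \<in> \<Sigma>" and "ar a = 1" and "inj_on ac {1..}"
    and "\<forall>l\<ge>1. fresh_for (ac l) u v \<and> ar (ac l) = 1"
    and "solvable (\<Sigma> \<union> ac ` {1..}) ar (chain_comp a ac u) (chain_comp a ac v)"
  shows "solvable \<Sigma> ar u v"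
proof (rule solvable_of_expand[OF natural_chain_expansion ground_chain_expansion _ _ assms(5)])
  have "\<forall>l\<ge>1. ac l \<notin> funs u" and "\<forall>l\<ge>1. ac l \<notin> funs v"
    using assms(4) by (simp_all add: fresh_for_def)
  then show "expand (chain_expansion a ac) (chain_comp a ac u) = u"
    and "expand (chain_expansion a ac) (chain_comp a ac v) = v"
    using expand_chain_comp_aux[OF assms(3), of _ a 0] by (simp_all add: chain_comp_def)
qed (use assms in auto)

theorem lemma4p2:
  fixes \<Sigma> :: "'f set" and ar :: "'f \<Rightarrow> nat"
    and u v u' v' :: "('f, 'v, 'c) tm" and \<Sigma>' :: "'f set"
  assumes "is_term \<Sigma> ar u" and "is_term \<Sigma> ar v"
    and "one_step \<Sigma> ar u v \<Sigma>' u' v'"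
    and "solvable \<Sigma>' ar u' v'"
  shows "solvable \<Sigma> ar u v"
  using assms(3) unfolding one_step_def
  by (elim disjE exE conjE; hypsubst)
    (use assms(4) in \<open>blast intro: solvable_of_pre_cvar solvable_of_pre_var solvable_of_post_cvar
       solvable_of_inst_var solvable_of_leaf_comp solvable_of_pair_comp solvable_of_chain_comp\<close>)+

end
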